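(* Fix all parameters of the cathode model ($h_1,h_2,\sigma_{\mathrm{el}},\sigma_{\mathrm{ion}},\rho_a,D_2,M,F,R,T,A,j_{\mathrm{cell}}>0,V_2,C^{\mathrm{bulk}}$). Let $h_1<h_b<h_b'<h_2$. There do not exist two triples with all of the following properties: 1. $(\phi^{I}_{\mathrm{el}},\phi^{I}_{\mathrm{ion}},C^{I})$ is a cathode solution in the modified formulation with active-layer boundary $h_b$. 2. $(\phi^{II}_{\mathrm{el}},\phi^{II}_{\mathrm{ion}},C^{II})$ is a cathode solution in the modified formulation with active-layer boundary $h_b'$. 3. Their signed quantities $s^{I}$ and $s^{II}$ are nonnegative on $[h_1,h_b]$ and $[h_1,h_b']$ respectively. 4. $s^{II}(h_b)>0$. 5. On $[h_1,h_b]$ the function $C^{II}-C^{I}$ is positive and nonincreasing. In other words, under these conditions the active-layer boundary cannot be enlarged from $h_b$ to $h_b'$ while keeping the cell current and boundary data fixed.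
   Context: Cathode model (isothermal, 1D). Fix real numbers $0<h_1<h_b<h_2$ and positive constants $\sigma_{\mathrm{el}},\sigma_{\mathrm{ion}}$ (effective electronic/ionic conductivities), $\rho_a$ (air density), $D_2$ (effective diffusion coefficient), $M$ (molar mass of $O_2$), $F$ (Faraday constant), $R$ (gas constant), $T$ (temperature), $A$ (reaction surface area per volume). Also fix $j_{\mathrm{cell}}>0$, $V_2\in\mathbb R$ and $C^{\mathrm{bulk}}\in(0,1)$. Charge-transfer current. For $y\in(h_1,h_b)$ set $$i(y)=A\,K\,\Big(\frac{\rho_a R T\,C(y)}{M}\Big)^{0.2}\Big[\exp\Big(\frac{1.2F\eta(y)}{RT}\Big)-\exp\Big(-\frac{F\eta(y)}{RT}\Big)\Big],\qquad K=1.47\cdot10^{6}\,e^{-85859/(RT)}.$$ Define the signed quantity $$s(y)=\phi_{\mathrm{ion}}(y)-\phi_{\mathrm{el}}(y)-\frac{RT}{4F}\ln\frac{C^{\mathrm{bulk}}}{C(y)}.$$ The activation overpotential is $\eta=s$ in the classical formulation and $\eta=|s|$ in the modified formulation. A cathode solution with active-layer boundary $h_b$ is a triple $\phi_{\mathrm{el}},\phi_{\mathrm{ion}},C\in C^1([h_1,h_2])$ with the following properties. - Regularity: each function is $C^2$ on $[h_1,h_b]$ and on $[h_b,h_2]$, and $C>0$. - Equations on $(h_1,h_b)$: $(\sigma_{\mathrm{el}}\phi_{\mathrm{el}}')'=-i$, $(\sigma_{\mathrm{ion}}\phi_{\mathrm{ion}}')'=i$ and $(\rho_aD_2C')'=\frac{M}{4F}i$.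 - Equations on $(h_b,h_2)$: all three left-hand sides vanish. - Boundary conditions: $-\sigma_{\mathrm{el}}\phi_{\mathrm{el}}'(h_2)=j_{\mathrm{cell}}$, $\phi_{\mathrm{ion}}'(h_2)=0$, $\phi_{\mathrm{el}}(h_2)=V_2$, $C(h_2)=C^{\mathrm{bulk}}$, $\phi_{\mathrm{el}}'(h_1)=0$, $-\sigma_{\mathrm{ion}}\phi_{\mathrm{ion}}'(h_1)=j_{\mathrm{cell}}$, $C'(h_1)=0$. - Interface condition: $s(h_b)=0$, i.e. $\eta(h_b)=0$. In the claim, $s^{I}$ and $s^{II}$ denote the signed quantity $s$ computed from the respective triple. *)

theory Defs
  imports "HOL-Analysis.Analysis"
begin

record cathode_params =
  h1 :: real
  h2 :: real
  sigma_el :: real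
  sigma_ion :: real
  rho_a :: real
  D2 :: real
  Mm :: real      (* molar mass of O2 *)
  Fc :: real
  Rg :: real
  Tt :: real
  Aa :: real      (* reaction surface area per volume *)
  j_cell :: real
  V2 :: real
  C_bulk :: real

definition params_ok :: "cathode_params \<Rightarrow> bool" where
  "params_ok P \<longleftrightarrow> 0 < h1 P \<and> h1 P < h2 P \<and> 0 < sigma_el P \<and> 0 < sigma_ion P \<and>
     0 < rho_a P \<and> 0 < D2 P \<and> 0 < Mm P \<and> 0 < Fc P \<and> 0 < Rg P \<and> 0 < Tt P \<and> 0 < Aa P \<and>
     0 < j_cell P \<and> 0 < C_bulk P \<and> C_bulk P < 1"

definition K_rate :: "cathode_params \<Rightarrow> real" where
  "K_rate P = (147 / 100) * 10 ^ 6 * exp (- 85859 / (Rg P * Tt P))"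

definition i_ct :: "cathode_params \<Rightarrow> real \<Rightarrow> real \<Rightarrow> real" where
  "i_ct P c eta = Aa P * K_rate P * ((rho_a P * Rg P * Tt P * c / Mm P) powr (1/5)) *
     (exp ((6/5) * Fc P * eta / (Rg P * Tt P)) - exp (- Fc P * eta / (Rg P * Tt P)))"

definition s_fun :: "cathode_params \<Rightarrow> (real \<Rightarrow> real) \<Rightarrow> (real \<Rightarrow> real) \<Rightarrow> (real \<Rightarrow> real) \<Rightarrow> real \<Rightarrow> real" where
  "s_fun P phel phion C y = phion y - phel y - Rg P * Tt P / (4 * Fc P) * ln (C_bulk P / C y)"

definition pw_C2 :: "real \<Rightarrow> real \<Rightarrow> real \<Rightarrow> (real \<Rightarrow> real) \<Rightarrow> (real \<Rightarrow> real) \<Rightarrow> (real \<Rightarrow> real) \<Rightarrow> (real \<Rightarrow> real) \<Rightarrow> bool" where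
  "pw_C2 a hb b f f' g1 g2 \<longleftrightarrow>
     continuous_on {a..b} f' \<and>
     (\<forall>x\<in>{a..b}. (f has_real_derivative f' x) (at x within {a..b})) \<and>
     (\<forall>x\<in>{a..hb}. (f' has_real_derivative g1 x) (at x within {a..hb})) \<and>
     (\<forall>x\<in>{hb..b}. (f' has_real_derivative g2 x) (at x within {hb..b})) \<and>
     continuous_on {a..hb} g1 \<and> continuous_on {hb..b} g2"

text \<open>Cathode solution with active-layer boundary hb; the overpotential is eta_of (s),
  i.e. eta_of = id for the classical and eta_of = abs for the modified formulation.\<close>
definition cathode_solution ::
  "cathode_params \<Rightarrow> (real \<Rightarrow> real) \<Rightarrow> real \<Rightarrow> (real \<Rightarrow> real) \<Rightarrow> (real \<Rightarrow> real) \<Rightarrow> (real \<Rightarrow> real) \<Rightarrow> bool" where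
  "cathode_solution P eta_of hb phel phion C \<longleftrightarrow>
     (\<exists>phel' phel1 phel2 phion' phion1 phion2 C' C1 C2.
        pw_C2 (h1 P) hb (h2 P) phel phel' phel1 phel2 \<and>
        pw_C2 (h1 P) hb (h2 P) phion phion' phion1 phion2 \<and>
        pw_C2 (h1 P) hb (h2 P) C C' C1 C2 \<and>
        (\<forall>y\<in>{h1 P..h2 P}. C y > 0) \<and>
        (\<forall>y\<in>{h1 P<..<hb}.
           let i = i_ct P (C y) (eta_of (s_fun P phel phion C y)) in
           sigma_el P * phel1 y = - i \<and>
           sigma_ion P * phion1 y = i \<and>
           rho_a P * D2 P * C1 y = Mm P / (4 * Fc P) * i) \<and>
        (\<forall>y\<in>{hb<..<h2 P}. sigma_el P * phel2 y = 0 \<and> sigma_ion P * phion2 y = 0 \<and>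
                            rho_a P * D2 P * C2 y = 0) \<and>
        - sigma_el P * phel' (h2 P) = j_cell P \<and>
        phion' (h2 P) = 0 \<and>
        phel (h2 P) = V2 P \<and>
        C (h2 P) = C_bulk P \<and>
        phel' (h1 P) = 0 \<and>
        - sigma_ion P * phion' (h1 P) = j_cell P \<and>
        C' (h1 P) = 0 \<and>
        s_fun P phel phion C hb = 0)"

abbreviation modified_solution where
  "modified_solution P \<equiv> cathode_solution P abs"

end

theory Submission
  imports Defs
begin

text \<open>Write d = C_II - C_I on [h1, hb]. With the boundary conditions at h1 the active-layer
  equations integrate once to sigma_el phel' + sigma_ion phion' = - j_cell and
  rho_a D2 C' = - (M / 4F) sigma_el phel'. Hence s' = kappa(C) C' - j_cell / sigma_ion with kappa
  positive and decreasing, and C' >= 0. Since d is nonincreasing, C_II' <= C_I', so s_II - s_I is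
  nonincreasing; it is positive at hb, where s_I vanishes. Thus s_II > s_I >= 0 and C_II > C_I
  inside the layer, so the reaction current of the second solution is the larger one and d'' > 0
  there. With d'(h1) = 0 this gives d' > 0, contradicting the monotonicity of d.\<close>

lemma has_real_derivative_Icc_zero_imp_const:
  fixes f f' :: "real \<Rightarrow> real"
  assumes der: "\<And>x. x \<in> {a..b} \<Longrightarrow> (f has_real_derivative f' x) (at x within {a..b})"
    and zero: "\<And>x. x \<in> {a<..<b} \<Longrightarrow> f' x = 0"
    and y: "y \<in> {a..b}"
  shows "f y = f a"
proof (cases "a = y")
  case False
  show ?thesis
  proof (rule DERIV_isconst_end[of a y f])
    show "a < y" using y False by simp
    have "continuous_on {a..b} f" using der by (rule DERIV_continuous_on)
    then show "continuous_on {a..y} f" by (rule continuous_on_subset) (use y in auto)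
    fix x assume "a < x" "x < y"
    then show "DERIV f x :> 0" using der[of x] zero[of x] y by (simp add: at_within_Icc_at)
  qed
qed simp

lemma has_real_derivative_Icc_nonneg_imp_mono:
  fixes f f' :: "real \<Rightarrow> real"
  assumes der: "\<And>x. x \<in> {a..b} \<Longrightarrow> (f has_real_derivative f' x) (at x within {a..b})"
    and nonneg: "\<And>x. x \<in> {a<..<b} \<Longrightarrow> 0 \<le> f' x"
    and "a \<le> x" "x \<le> y" "y \<le> b"
  shows "f x \<le> f y"
proof (rule DERIV_nonneg_imp_increasing_open[OF \<open>x \<le> y\<close>])
  have "continuous_on {a..b} f" using der by (rule DERIV_continuous_on)
  then show "continuous_on {x..y} f" by (rule continuous_on_subset) (use assms(3-5) in auto)
  fix z assume "x < z" "z < y"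
  then show "\<exists>d. DERIV f z :> d \<and> 0 \<le> d"
    using der[of z] nonneg[of z] assms(3-5) by (auto simp: at_within_Icc_at)
qed

lemma has_real_derivative_Icc_pos_imp_strict_mono:
  fixes f f' :: "real \<Rightarrow> real"
  assumes der: "\<And>x. x \<in> {a..b} \<Longrightarrow> (f has_real_derivative f' x) (at x within {a..b})"
    and pos: "\<And>x. x \<in> {a<..<b} \<Longrightarrow> 0 < f' x"
    and "a \<le> x" "x < y" "y \<le> b"
  shows "f x < f y"
proof (rule DERIV_pos_imp_increasing_open[OF \<open>x < y\<close>])
  have "continuous_on {a..b} f" using der by (rule DERIV_continuous_on)
  then show "continuous_on {x..y} f" by (rule continuous_on_subset) (use assms(3-5) in auto)
  fix z assume "x < z" "z < y"
  then show "\<exists>d. DERIV f z :> d \<and> 0 < d"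
    using der[of z] pos[of z] assms(3-5) by (auto simp: at_within_Icc_at)
qed

lemma antimono_on_has_real_derivative_nonpos:
  fixes f :: "real \<Rightarrow> real"
  assumes anti: "\<And>x y. x \<in> {a..b} \<Longrightarrow> y \<in> {a..b} \<Longrightarrow> x \<le> y \<Longrightarrow> f y \<le> f x"
    and der: "(f has_real_derivative D) (at x within {a..b})"
    and x: "a \<le> x" "x < b"
  shows "D \<le> 0"
proof (rule ccontr)
  assume "\<not> D \<le> 0"
  then obtain d where "d > 0" and d: "\<And>h. 0 < h \<Longrightarrow> x + h \<in> {a..b} \<Longrightarrow> h < d \<Longrightarrow> f x < f (x + h)"
    using has_real_derivative_pos_inc_right[OF der] by force
  define h where "h = min (d / 2) (b - x)"
  have "0 < h" "x + h \<in> {a..b}" "h < d" using \<open>d > 0\<close> x by (auto simp: h_def)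
  then have "f x < f (x + h)" by (rule d)
  moreover have "f (x + h) \<le> f x" using anti \<open>x + h \<in> {a..b}\<close> \<open>0 < h\<close> x by auto
  ultimately show False by simp
qed

lemma K_rate_pos: "0 < K_rate P"
  unfolding K_rate_def by simp

lemma butler_volmer_factor_nonneg:
  assumes "params_ok P" "0 \<le> eta"
  shows "0 \<le> exp (6/5 * Fc P * eta / (Rg P * Tt P)) - exp (- Fc P * eta / (Rg P * Tt P))"
proof -
  have "0 < Rg P * Tt P" "0 < Fc P" using assms(1) by (auto simp: params_ok_def)
  then have "- Fc P * eta / (Rg P * Tt P) \<le> 6/5 * Fc P * eta / (Rg P * Tt P)"
    using assms(2) by (intro divide_right_mono) auto
  then show ?thesis by simp
qed

lemma i_ct_nonneg:
  assumes "params_ok P" "0 \<le> eta"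
  shows "0 \<le> i_ct P c eta"
proof -
  have "0 < Aa P" using assms(1) by (simp add: params_ok_def)
  then show ?thesis
    unfolding i_ct_def using K_rate_pos[of P] butler_volmer_factor_nonneg[OF assms]
    by (intro mult_nonneg_nonneg) auto
qed

lemma i_ct_strict_mono:
  assumes "params_ok P" "0 < c1" "c1 < c2" "0 \<le> eta1" "eta1 < eta2"
  shows "i_ct P c1 eta1 < i_ct P c2 eta2"
proof -
  have p: "0 < Rg P * Tt P" "0 < Fc P" "0 < Aa P" "0 < rho_a P" "0 < Mm P"
    using assms(1) by (auto simp: params_ok_def)
  define k where "k = rho_a P * Rg P * Tt P / Mm P"
  have k: "0 < k"
    using p by (simp add: k_def mult.assoc)
  define B where "B c = (k * c) powr (1/5)" for c
  define E where "E eta = exp (6/5 * Fc P * eta / (Rg P * Tt P)) - exp (- Fc P * eta / (Rg P * Tt P))"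
    for eta
  have "B c1 < B c2"
    unfolding B_def using k assms(2,3) by (intro powr_less_mono2) auto
  moreover have "0 < B c1"
    unfolding B_def using k assms(2) by simp
  moreover have "E eta1 < E eta2"
  proof -
    have "6/5 * Fc P * eta1 / (Rg P * Tt P) < 6/5 * Fc P * eta2 / (Rg P * Tt P)"
      "- Fc P * eta2 / (Rg P * Tt P) < - Fc P * eta1 / (Rg P * Tt P)"
      using p assms(5) by (auto intro!: divide_strict_right_mono)
    then show ?thesis unfolding E_def by (smt (verit) exp_less_mono)
  qed
  moreover have "0 \<le> E eta1"
    unfolding E_def using butler_volmer_factor_nonneg[OF assms(1,4)] .
  ultimately have "B c1 * E eta1 < B c2 * E eta2"
    by (intro mult_le_less_imp_less) auto
  then have "(Aa P * K_rate P) * (B c1 * E eta1) < (Aa P * K_rate P) * (B c2 * E eta2)"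
    using p K_rate_pos[of P] by (intro mult_strict_left_mono) auto
  then show ?thesis
    unfolding i_ct_def B_def E_def k_def by (simp add: mult.assoc)
qed

lemma has_real_derivative_s_fun:
  assumes "params_ok P" "0 < C x"
    and "(phel has_real_derivative phel') (at x within S)"
    and "(phion has_real_derivative phion') (at x within S)"
    and "(C has_real_derivative C') (at x within S)"
  shows "(s_fun P phel phion C has_real_derivative
           phion' - phel' + Rg P * Tt P / (4 * Fc P) * (C' / C x)) (at x within S)"
proof -
  have "0 < C_bulk P" "0 < Fc P" using assms(1) by (auto simp: params_ok_def)
  then show ?thesis
    unfolding s_fun_def[abs_def] using assms(2)
    by (auto intro!: derivative_eq_intros assms(3-5) simp: field_simps power2_eq_square)
qed

text \<open>The two linear relations stand in for the equations of the potentials: they are their first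
  integrals, fixed by the boundary conditions at the left end a.\<close>
definition active_layer_profile ::
  "cathode_params \<Rightarrow> real \<Rightarrow> real \<Rightarrow> (real \<Rightarrow> real) \<Rightarrow> (real \<Rightarrow> real) \<Rightarrow> (real \<Rightarrow> real) \<Rightarrow>
   (real \<Rightarrow> real) \<Rightarrow> (real \<Rightarrow> real) \<Rightarrow> (real \<Rightarrow> real) \<Rightarrow> (real \<Rightarrow> real) \<Rightarrow> bool" where
  "active_layer_profile P a b phel phion C phel' phion' C' C'' \<longleftrightarrow>
     (\<forall>x\<in>{a..b}.
        (phel has_real_derivative phel' x) (at x within {a..b}) \<and>
        (phion has_real_derivative phion' x) (at x within {a..b}) \<and>
        (C has_real_derivative C' x) (at x within {a..b}) \<and>
        (C' has_real_derivative C'' x) (at x within {a..b}) \<and>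
        0 < C x \<and>
        sigma_el P * phel' x + sigma_ion P * phion' x = - j_cell P \<and>
        rho_a P * D2 P * C' x + Mm P / (4 * Fc P) * sigma_el P * phel' x = 0) \<and>
     (\<forall>x\<in>{a<..<b}. rho_a P * D2 P * C'' x = Mm P / (4 * Fc P) * i_ct P (C x) \<bar>s_fun P phel phion C x\<bar>) \<and>
     C' a = 0"

lemma active_layer_profile_restrict:
  assumes "active_layer_profile P a b phel phion C phel' phion' C' C''" "c \<le> b"
  shows "active_layer_profile P a c phel phion C phel' phion' C' C''"
proof -
  have sub: "{a..c} \<subseteq> {a..b}" using assms(2) by auto
  show ?thesis
    using assms(1) sub unfolding active_layer_profile_def
    by (auto intro: DERIV_subset[OF _ sub])
qed

lemma modified_solution_active_layer_profile:
  assumes ok: "params_ok P" and sol: "modified_solution P hb phel phion C" and "hb \<le> h2 P"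
  obtains phel' phion' C' C'' where "active_layer_profile P (h1 P) hb phel phion C phel' phion' C' C''"
proof -
  let ?I = "{h1 P..hb}"
  from sol obtain phel' phel1 phel2 phion' phion1 phion2 C' C1 C2 where
    pw: "pw_C2 (h1 P) hb (h2 P) phel phel' phel1 phel2"
        "pw_C2 (h1 P) hb (h2 P) phion phion' phion1 phion2"
        "pw_C2 (h1 P) hb (h2 P) C C' C1 C2" and
    Cpos: "\<forall>y\<in>{h1 P..h2 P}. C y > 0" and
    ode: "\<forall>y\<in>{h1 P<..<hb}.
           let i = i_ct P (C y) \<bar>s_fun P phel phion C y\<bar> in
           sigma_el P * phel1 y = - i \<and> sigma_ion P * phion1 y = i \<and>
           rho_a P * D2 P * C1 y = Mm P / (4 * Fc P) * i" and
    bc: "phel' (h1 P) = 0" "- sigma_ion P * phion' (h1 P) = j_cell P" "C' (h1 P) = 0"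
    unfolding cathode_solution_def by blast
  have F: "Fc P \<noteq> 0" using ok by (simp add: params_ok_def)
  have sub: "?I \<subseteq> {h1 P..h2 P}" using assms(3) by auto
  have der: "\<And>x. x \<in> ?I \<Longrightarrow> (phel has_real_derivative phel' x) (at x within ?I)"
            "\<And>x. x \<in> ?I \<Longrightarrow> (phion has_real_derivative phion' x) (at x within ?I)"
            "\<And>x. x \<in> ?I \<Longrightarrow> (C has_real_derivative C' x) (at x within ?I)"
    using pw sub by (auto simp: pw_C2_def intro!: DERIV_subset[OF _ sub])
  have der2: "\<And>x. x \<in> ?I \<Longrightarrow> (phel' has_real_derivative phel1 x) (at x within ?I)"
             "\<And>x. x \<in> ?I \<Longrightarrow> (phion' has_real_derivative phion1 x) (at x within ?I)"
             "\<And>x. x \<in> ?I \<Longrightarrow> (C' has_real_derivative C1 x) (at x within ?I)"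
    using pw by (auto simp: pw_C2_def)
  have current: "sigma_el P * phel' x + sigma_ion P * phion' x = - j_cell P" if "x \<in> ?I" for x
  proof -
    have "sigma_el P * phel' x + sigma_ion P * phion' x =
          sigma_el P * phel' (h1 P) + sigma_ion P * phion' (h1 P)"
      by (rule has_real_derivative_Icc_zero_imp_const
            [where f = "\<lambda>x. sigma_el P * phel' x + sigma_ion P * phion' x"
               and f' = "\<lambda>x. sigma_el P * phel1 x + sigma_ion P * phion1 x", OF _ _ that])
         (use der2 ode in \<open>auto intro!: derivative_eq_intros simp: Let_def\<close>)
    then show ?thesis using bc by simp
  qed
  have oxygen: "rho_a P * D2 P * C' x + Mm P / (4 * Fc P) * sigma_el P * phel' x = 0" if "x \<in> ?I" for x
  proof -
    have "rho_a P * D2 P * C' x + Mm P / (4 * Fc P) * sigma_el P * phel' x =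
          rho_a P * D2 P * C' (h1 P) + Mm P / (4 * Fc P) * sigma_el P * phel' (h1 P)"
      by (rule has_real_derivative_Icc_zero_imp_const
            [where f = "\<lambda>x. rho_a P * D2 P * C' x + Mm P / (4 * Fc P) * sigma_el P * phel' x"
               and f' = "\<lambda>x. rho_a P * D2 P * C1 x + Mm P / (4 * Fc P) * (sigma_el P * phel1 x)",
               OF _ _ that])
         (use der2 ode F in \<open>auto intro!: derivative_eq_intros simp: Let_def\<close>)
    then show ?thesis using bc by simp
  qed
  have "active_layer_profile P (h1 P) hb phel phion C phel' phion' C' C1"
    unfolding active_layer_profile_def
    using der der2 Cpos sub current oxygen ode bc by (auto simp: Let_def)
  then show ?thesis by (rule that)
qed

lemma active_layer_profile_conc_deriv_nonneg:
  assumes ok: "params_ok P" and prof: "active_layer_profile P a b phel phion C phel' phion' C' C''"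
    and x: "x \<in> {a..b}"
  shows "0 \<le> C' x"
proof -
  have p: "0 < rho_a P * D2 P" "0 < Mm P / (4 * Fc P)" using ok by (auto simp: params_ok_def)
  have "C' a \<le> C' x"
  proof (rule has_real_derivative_Icc_nonneg_imp_mono[where f = C' and f' = C''])
    fix z assume "z \<in> {a<..<b}"
    then have "rho_a P * D2 P * C'' z = Mm P / (4 * Fc P) * i_ct P (C z) \<bar>s_fun P phel phion C z\<bar>"
      using prof by (simp add: active_layer_profile_def)
    moreover have "0 \<le> i_ct P (C z) \<bar>s_fun P phel phion C z\<bar>"
      by (rule i_ct_nonneg[OF ok]) simp
    ultimately have "0 \<le> rho_a P * D2 P * C'' z" using p(2) by (metis less_eq_real_def mult_nonneg_nonneg)
    then show "0 \<le> C'' z" using p by (simp add: zero_le_mult_iff)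
  qed (use prof x in \<open>auto simp: active_layer_profile_def\<close>)
  then show ?thesis using prof by (simp add: active_layer_profile_def)
qed

lemma active_layer_profile_s_fun_deriv:
  assumes ok: "params_ok P" and prof: "active_layer_profile P a b phel phion C phel' phion' C' C''"
    and x: "x \<in> {a..b}"
  shows "(s_fun P phel phion C has_real_derivative
           (4 * Fc P * rho_a P * D2 P / Mm P * (1 / sigma_el P + 1 / sigma_ion P)
              + Rg P * Tt P / (4 * Fc P * C x)) * C' x - j_cell P / sigma_ion P)
         (at x within {a..b})"
proof -
  have p: "0 < sigma_el P" "0 < sigma_ion P" "0 < Mm P" "0 < Fc P"
    using ok by (auto simp: params_ok_def)
  from prof x have Cx: "0 < C x"
    and current: "sigma_el P * phel' x + sigma_ion P * phion' x = - j_cell P"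
    and oxygen: "rho_a P * D2 P * C' x + Mm P / (4 * Fc P) * sigma_el P * phel' x = 0"
    by (auto simp: active_layer_profile_def)
  have "(s_fun P phel phion C has_real_derivative
           phion' x - phel' x + Rg P * Tt P / (4 * Fc P) * (C' x / C x)) (at x within {a..b})"
    by (rule has_real_derivative_s_fun[of P C x, OF ok Cx];
        use prof x in \<open>simp add: active_layer_profile_def\<close>)
  moreover have "phion' x - phel' x + Rg P * Tt P / (4 * Fc P) * (C' x / C x) =
      (4 * Fc P * rho_a P * D2 P / Mm P * (1 / sigma_el P + 1 / sigma_ion P)
         + Rg P * Tt P / (4 * Fc P * C x)) * C' x - j_cell P / sigma_ion P"
  proof -
    have el: "phel' x = - (4 * Fc P * rho_a P * D2 P / Mm P) * C' x / sigma_el P"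
      using oxygen p by (simp add: field_simps)
    have ion: "phion' x = (- j_cell P - sigma_el P * phel' x) / sigma_ion P"
      using current p by (simp add: field_simps)
    show ?thesis
      unfolding ion el using p Cx by (simp add: field_simps)
  qed
  ultimately show ?thesis by simp
qed

lemma active_layer_profile_s_gap_antimono:
  assumes ok: "params_ok P"
    and profI: "active_layer_profile P a b phelI phionI CI phelI' phionI' CI' CI''"
    and profII: "active_layer_profile P a b phelII phionII CII phelII' phionII' CII' CII''"
    and conc: "\<And>x. x \<in> {a<..<b} \<Longrightarrow> CI x < CII x"
    and flux: "\<And>x. x \<in> {a<..<b} \<Longrightarrow> CII' x \<le> CI' x"
    and x: "x \<in> {a..b}"
  shows "s_fun P phelII phionII CII b - s_fun P phelI phionI CI b
           \<le> s_fun P phelII phionII CII x - s_fun P phelI phionI CI x"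
proof -
  define kappa where "kappa c = 4 * Fc P * rho_a P * D2 P / Mm P * (1 / sigma_el P + 1 / sigma_ion P)
                          + Rg P * Tt P / (4 * Fc P * c)" for c
  have p: "0 < sigma_el P" "0 < sigma_ion P" "0 < Mm P" "0 < Fc P" "0 < rho_a P" "0 < D2 P"
    "0 < Rg P * Tt P"
    using ok by (auto simp: params_ok_def)
  have "s_fun P phelI phionI CI x - s_fun P phelII phionII CII x
          \<le> s_fun P phelI phionI CI b - s_fun P phelII phionII CII b"
  proof (rule has_real_derivative_Icc_nonneg_imp_mono
      [where f = "\<lambda>z. s_fun P phelI phionI CI z - s_fun P phelII phionII CII z"
         and f' = "\<lambda>z. (kappa (CI z) * CI' z - j_cell P / sigma_ion P)
                      - (kappa (CII z) * CII' z - j_cell P / sigma_ion P)"])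
    fix z assume "z \<in> {a..b}"
    then show "((\<lambda>z. s_fun P phelI phionI CI z - s_fun P phelII phionII CII z) has_real_derivative
        (kappa (CI z) * CI' z - j_cell P / sigma_ion P)
          - (kappa (CII z) * CII' z - j_cell P / sigma_ion P)) (at z within {a..b})"
      unfolding kappa_def
      by (intro DERIV_diff active_layer_profile_s_fun_deriv[OF ok profI]
          active_layer_profile_s_fun_deriv[OF ok profII])
  next
    fix z assume z: "z \<in> {a<..<b}"
    have pos: "0 < CI z" "0 < CII z" "0 \<le> CI' z"
      using profI profII z active_layer_profile_conc_deriv_nonneg[OF ok profI, of z]
      by (auto simp: active_layer_profile_def)
    have "kappa (CII z) \<le> kappa (CI z)"
      unfolding kappa_def using p pos conc[OF z] by (auto intro!: divide_left_mono mult_pos_pos)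
    moreover have "0 < kappa (CII z)"
      unfolding kappa_def using p pos by (auto intro!: add_pos_pos mult_pos_pos divide_pos_pos)
    ultimately have "kappa (CII z) * CII' z \<le> kappa (CI z) * CI' z"
      using flux[OF z] pos by (meson less_imp_le mult_left_mono mult_right_mono order_trans)
    then show "0 \<le> (kappa (CI z) * CI' z - j_cell P / sigma_ion P)
                     - (kappa (CII z) * CII' z - j_cell P / sigma_ion P)"
      by simp
  qed (use x in auto)
  then show ?thesis by simp
qed

lemma active_layer_profile_conc_deriv_gap_pos:
  assumes ok: "params_ok P"
    and profI: "active_layer_profile P a b phelI phionI CI phelI' phionI' CI' CI''"
    and profII: "active_layer_profile P a b phelII phionII CII phelII' phionII' CII' CII''"
    and conc: "\<And>x. x \<in> {a<..<b} \<Longrightarrow> CI x < CII x"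
    and s: "\<And>x. x \<in> {a<..<b} \<Longrightarrow>
              0 \<le> s_fun P phelI phionI CI x \<and> s_fun P phelI phionI CI x < s_fun P phelII phionII CII x"
    and x: "a < x" "x \<le> b"
  shows "CI' x < CII' x"
proof -
  have p: "0 < rho_a P * D2 P" "0 < Mm P / (4 * Fc P)"
    using ok by (auto simp: params_ok_def)
  have "CII' a - CI' a < CII' x - CI' x"
  proof (rule has_real_derivative_Icc_pos_imp_strict_mono
      [where f = "\<lambda>z. CII' z - CI' z" and f' = "\<lambda>z. CII'' z - CI'' z"])
    fix z assume "z \<in> {a..b}"
    then show "((\<lambda>z. CII' z - CI' z) has_real_derivative CII'' z - CI'' z) (at z within {a..b})"
      using profI profII by (intro DERIV_diff) (auto simp: active_layer_profile_def)
  next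
    fix z assume z: "z \<in> {a<..<b}"
    have "0 < CI z" using profI z by (auto simp: active_layer_profile_def)
    with s[OF z] conc[OF z] have "i_ct P (CI z) \<bar>s_fun P phelI phionI CI z\<bar>
                                  < i_ct P (CII z) \<bar>s_fun P phelII phionII CII z\<bar>"
      by (intro i_ct_strict_mono[OF ok]) auto
    then have "Mm P / (4 * Fc P) * i_ct P (CI z) \<bar>s_fun P phelI phionI CI z\<bar>
               < Mm P / (4 * Fc P) * i_ct P (CII z) \<bar>s_fun P phelII phionII CII z\<bar>"
      using p(2) by (rule mult_strict_left_mono)
    then have "rho_a P * D2 P * CI'' z < rho_a P * D2 P * CII'' z"
      using profI profII z unfolding active_layer_profile_def by simp
    then show "0 < CII'' z - CI'' z" using p(1) by (simp add: mult_less_cancel_left_pos)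
  qed (use x in auto)
  then show ?thesis using profI profII by (simp add: active_layer_profile_def)
qed

theorem mainTheorem5:
  fixes P :: cathode_params and hb hb' :: real
  assumes "params_ok P"
    and "h1 P < hb" and "hb < hb'" and "hb' < h2 P"
  shows "\<not> (\<exists>phelI phionI CI phelII phionII CII.
           modified_solution P hb phelI phionI CI \<and>
           modified_solution P hb' phelII phionII CII \<and>
           (\<forall>y\<in>{h1 P..hb}. s_fun P phelI phionI CI y \<ge> 0) \<and>
           (\<forall>y\<in>{h1 P..hb'}. s_fun P phelII phionII CII y \<ge> 0) \<and>
           s_fun P phelII phionII CII hb > 0 \<and>
           (\<forall>y\<in>{h1 P..hb}. CII y - CI y > 0) \<and>
           (\<forall>x\<in>{h1 P..hb}. \<forall>y\<in>{h1 P..hb}. x \<le> y \<longrightarrow> CII y - CI y \<le> CII x - CI x))"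
proof (intro notI, elim exE conjE)
  fix phelI phionI CI phelII phionII CII
  assume solI: "modified_solution P hb phelI phionI CI"
    and solII: "modified_solution P hb' phelII phionII CII"
    and sI: "\<forall>y\<in>{h1 P..hb}. s_fun P phelI phionI CI y \<ge> 0"
    and "\<forall>y\<in>{h1 P..hb'}. s_fun P phelII phionII CII y \<ge> 0"
      \<comment> \<open>not needed: s_II > s_I \<ge> 0 follows on [h1, hb]\<close>
    and sII_hb: "s_fun P phelII phionII CII hb > 0"
    and conc: "\<forall>y\<in>{h1 P..hb}. CII y - CI y > 0"
    and anti: "\<forall>x\<in>{h1 P..hb}. \<forall>y\<in>{h1 P..hb}. x \<le> y \<longrightarrow> CII y - CI y \<le> CII x - CI x"
  note ok = assms(1)
  obtain phelI' phionI' CI' CI'' where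
    profI: "active_layer_profile P (h1 P) hb phelI phionI CI phelI' phionI' CI' CI''"
    by (rule modified_solution_active_layer_profile[OF ok solI]) (use assms in auto)
  obtain phelII' phionII' CII' CII'' where
    "active_layer_profile P (h1 P) hb' phelII phionII CII phelII' phionII' CII' CII''"
    by (rule modified_solution_active_layer_profile[OF ok solII]) (use assms in auto)
  then have profII: "active_layer_profile P (h1 P) hb phelII phionII CII phelII' phionII' CII' CII''"
    using assms(3) by (auto intro: active_layer_profile_restrict)
  have flux: "CII' x \<le> CI' x" if "x \<in> {h1 P<..<hb}" for x
  proof -
    have "((\<lambda>z. CII z - CI z) has_real_derivative CII' x - CI' x) (at x within {h1 P..hb})"
      using profI profII that by (intro DERIV_diff) (auto simp: active_layer_profile_def)
    then have "CII' x - CI' x \<le> 0"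
      by (rule antimono_on_has_real_derivative_nonpos[rotated]) (use anti that in auto)
    then show ?thesis by simp
  qed
  have "s_fun P phelI phionI CI hb = 0"
    using solI unfolding cathode_solution_def by blast
  then have s_gap: "s_fun P phelI phionI CI x < s_fun P phelII phionII CII x"
    if "x \<in> {h1 P<..<hb}" for x using active_layer_profile_s_gap_antimono[OF ok profI profII _ flux, of x] conc sII_hb that by force
  define m where "m = (h1 P + hb) / 2"
  have m: "m \<in> {h1 P<..<hb}" using assms(2) by (simp add: m_def)
  have "CI' m < CII' m"
    using active_layer_profile_conc_deriv_gap_pos[OF ok profI profII] conc sI s_gap m by force
  with flux[OF m] show False by simp
qed

end
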